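(* For an integer $\ell\ge 2$, let $G_\ell$ be the graph obtained from the disjoint union of $\ell$ copies of $K_3$ by adding one new vertex adjacent to all $3\ell$ vertices of these copies. Then $G_\ell$ is planar and $\dim_l(G_\ell)=2\ell$. Consequently, there exist connected planar graphs $G$ with $\dim_l(G)>\left\lceil \frac{n(G)+1}{2}\right\rceil$.
   Context: All graphs are finite and simple; $n(G)$ is the number of vertices. For vertices $x,y$ of a connected graph $G$, $d_G(x,y)$ is the length of a shortest $x,y$-path. A vertex $w$ distinguishes vertices $u,v$ if $d_G(u,w)\neq d_G(v,w)$. A set $W\subseteq V(G)$ is a local resolving set of $G$ if for every pair of adjacent vertices $u,v\in V(G)\setminus W$ some vertex of $W$ distinguishes $u$ and $v$. The local metric dimension $\dim_l(G)$ is the minimum cardinality of a local resolving set of $G$. *)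

theory Defs
  imports "HOL-Analysis.Analysis"
begin

definition simple_graph :: "'a set \<Rightarrow> ('a \<Rightarrow> 'a \<Rightarrow> bool) \<Rightarrow> bool" where
  "simple_graph V E \<longleftrightarrow> finite V \<and> (\<forall>u v. E u v \<longrightarrow> u \<in> V \<and> v \<in> V)
     \<and> (\<forall>u v. E u v \<longrightarrow> E v u) \<and> (\<forall>u. \<not> E u u)"

definition is_walk :: "'a set \<Rightarrow> ('a \<Rightarrow> 'a \<Rightarrow> bool) \<Rightarrow> 'a list \<Rightarrow> bool" where
  "is_walk V E xs \<longleftrightarrow> xs \<noteq> [] \<and> set xs \<subseteq> V \<and> (\<forall>i. Suc i < length xs \<longrightarrow> E (xs ! i) (xs ! Suc i))"

definition connected_graph :: "'a set \<Rightarrow> ('a \<Rightarrow> 'a \<Rightarrow> bool) \<Rightarrow> bool" where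
  "connected_graph V E \<longleftrightarrow> V \<noteq> {} \<and>
     (\<forall>u\<in>V. \<forall>v\<in>V. \<exists>xs. is_walk V E xs \<and> hd xs = u \<and> last xs = v)"

definition gdist :: "'a set \<Rightarrow> ('a \<Rightarrow> 'a \<Rightarrow> bool) \<Rightarrow> 'a \<Rightarrow> 'a \<Rightarrow> nat" where
  "gdist V E u v = (LEAST n. \<exists>xs. is_walk V E xs \<and> hd xs = u \<and> last xs = v \<and> length xs = Suc n)"

definition local_resolving_set :: "'a set \<Rightarrow> ('a \<Rightarrow> 'a \<Rightarrow> bool) \<Rightarrow> 'a set \<Rightarrow> bool" where
  "local_resolving_set V E W \<longleftrightarrow> W \<subseteq> V \<and>
     (\<forall>u v. u \<in> V - W \<longrightarrow> v \<in> V - W \<longrightarrow> E u v \<longrightarrow>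
        (\<exists>w\<in>W. gdist V E u w \<noteq> gdist V E v w))"

definition local_metric_dim :: "'a set \<Rightarrow> ('a \<Rightarrow> 'a \<Rightarrow> bool) \<Rightarrow> nat" where
  "local_metric_dim V E = Min {card W | W. local_resolving_set V E W}"

definition planar_graph :: "'a set \<Rightarrow> ('a \<Rightarrow> 'a \<Rightarrow> bool) \<Rightarrow> bool" where
  "planar_graph V E \<longleftrightarrow> (\<exists>(pos :: 'a \<Rightarrow> complex) (c :: 'a \<Rightarrow> 'a \<Rightarrow> real \<Rightarrow> complex).
     inj_on pos V \<and>
     (\<forall>u v. E u v \<longrightarrow> arc (c u v) \<and> pathstart (c u v) = pos u \<and> pathfinish (c u v) = pos v \<and>
         (\<forall>w\<in>V. pos w \<in> path_image (c u v) \<longrightarrow> w = u \<or> w = v)) \<and>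
     (\<forall>u v x y. E u v \<longrightarrow> E x y \<longrightarrow> {u, v} \<noteq> {x, y} \<longrightarrow>
         path_image (c u v) \<inter> path_image (c x y) \<subseteq> pos ` ({u, v} \<inter> {x, y})))"

text \<open>The graph G_l: copies Some (i, j), i < l, j < 3, of K_3 plus a center None.\<close>
definition Gl_V :: "nat \<Rightarrow> (nat \<times> nat) option set" where
  "Gl_V l = insert None {Some (i, j) | i j. i < l \<and> j < 3}"

fun Gl_E :: "nat \<Rightarrow> (nat \<times> nat) option \<Rightarrow> (nat \<times> nat) option \<Rightarrow> bool" where
  "Gl_E l None None = False"
| "Gl_E l None (Some (i, j)) = (i < l \<and> j < 3)"
| "Gl_E l (Some (i, j)) None = (i < l \<and> j < 3)"
| "Gl_E l (Some (i, j)) (Some (i', j')) = (i < l \<and> j < 3 \<and> i' = i \<and> j' < 3 \<and> j \<noteq> j')"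

end

theory Submission
  imports Defs
begin

(* The centre of G_l is adjacent to every other vertex, so all distances are 0, 1 or 2, and two
   vertices of the same triangle have the same distance to every third vertex.  Hence a local
   resolving set contains at least two vertices of each triangle.  Two vertices per triangle also
   suffice: the only adjacent pairs left are the centre and the third vertex of some triangle, and
   these are told apart by a vertex of another triangle, which exists for l >= 2.  For planarity
   the triangles are drawn with straight segments in disjoint sectors around the centre; any two
   of these segments are separated by a line.  For l = 4 we get n = 13 and dimension 8 > 7. *)

lemma mem_closed_segment_on_supporting_hyperplane:
  fixes n p q z :: "'a::real_inner"
  assumes z: "z \<in> closed_segment p q"
    and "n \<bullet> p \<le> c" "n \<bullet> q \<le> c" "n \<bullet> p < c \<or> n \<bullet> q < c" "c \<le> n \<bullet> z"
  shows "z = p \<or> z = q"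
proof -
  obtain u where u: "0 \<le> u" "u \<le> 1" "z = (1 - u) *\<^sub>R p + u *\<^sub>R q"
    using z by (auto simp: closed_segment_def)
  have nz: "n \<bullet> z = (1 - u) * (n \<bullet> p) + u * (n \<bullet> q)"
    by (simp add: u(3) inner_add_right)
  have "u = 0 \<or> u = 1"
  proof (rule ccontr)
    assume "\<not> (u = 0 \<or> u = 1)"
    with u have "0 < u" "0 < 1 - u" by auto
    then have "(1 - u) * (n \<bullet> p) + u * (n \<bullet> q) < (1 - u) * c + u * c"
      using assms(2-4) by (auto intro: add_less_le_mono add_le_less_mono)
    then show False using nz assms(5) by (simp add: algebra_simps)
  qed
  then show ?thesis using u(3) by auto
qed

definition segments_meet_at_ends :: "'a::real_vector \<Rightarrow> 'a \<Rightarrow> 'a \<Rightarrow> 'a \<Rightarrow> bool" where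
  "segments_meet_at_ends p q r s \<longleftrightarrow> closed_segment p q \<inter> closed_segment r s \<subseteq> {p, q} \<inter> {r, s}"

lemma segments_meet_at_ends_if_separated:
  fixes n p q r s :: "'a::real_inner"
  assumes "n \<bullet> p \<le> c" "n \<bullet> q \<le> c" "n \<bullet> p < c \<or> n \<bullet> q < c"
    and "c \<le> n \<bullet> r" "c \<le> n \<bullet> s" "c < n \<bullet> r \<or> c < n \<bullet> s"
  shows "segments_meet_at_ends p q r s"
  unfolding segments_meet_at_ends_def
proof
  fix z assume z: "z \<in> closed_segment p q \<inter> closed_segment r s"
  have "closed_segment p q \<subseteq> {x. n \<bullet> x \<le> c}"
    by (rule closed_segment_subset) (use assms in \<open>simp_all add: convex_halfspace_le\<close>)
  moreover have "closed_segment r s \<subseteq> {x. c \<le> n \<bullet> x}"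
    by (rule closed_segment_subset) (use assms in \<open>simp_all add: convex_halfspace_ge\<close>)
  ultimately have "n \<bullet> z \<le> c" "c \<le> n \<bullet> z" using z by auto
  then have "z = p \<or> z = q" "z = r \<or> z = s"
    using mem_closed_segment_on_supporting_hyperplane[of z p q n c]
      mem_closed_segment_on_supporting_hyperplane[of z r s "- n" "- c"] z assms by auto
  then show "z \<in> {p, q} \<inter> {r, s}" by auto
qed

lemma segments_meet_at_ends_swap:
  assumes "segments_meet_at_ends p q r s"
  shows "segments_meet_at_ends q p r s" "segments_meet_at_ends p q s r"
    "segments_meet_at_ends q p s r" "segments_meet_at_ends r s p q" "segments_meet_at_ends s r p q"
    "segments_meet_at_ends r s q p" "segments_meet_at_ends s r q p"
  using assms unfolding segments_meet_at_ends_def by (auto simp: closed_segment_commute)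

lemma planar_graph_if_straight_line_drawing:
  fixes pos :: "'a \<Rightarrow> complex"
  assumes graph: "simple_graph V E" and inj: "inj_on pos V"
    and degree: "\<And>w. w \<in> V \<Longrightarrow> 3 \<le> card {x. E w x}"
    and edges: "\<And>u v x y. E u v \<Longrightarrow> E x y \<Longrightarrow> {u, v} \<noteq> {x, y} \<Longrightarrow>
      segments_meet_at_ends (pos u) (pos v) (pos x) (pos y)"
  shows "planar_graph V E"
  unfolding planar_graph_def
proof (intro exI[of _ pos] exI[of _ "\<lambda>u v. linepath (pos u) (pos v)"] conjI allI impI ballI)
  have in_V: "u \<in> V" "v \<in> V" "u \<noteq> v" if "E u v" for u v
    using graph that unfolding simple_graph_def by metis+
  show "inj_on pos V" by (fact inj)
  fix u v assume uv: "E u v"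
  then have "pos u \<noteq> pos v" using in_V[OF uv] inj by (auto dest: inj_onD)
  then show "arc (linepath (pos u) (pos v))" by simp
  show "pathstart (linepath (pos u) (pos v)) = pos u" "pathfinish (linepath (pos u) (pos v)) = pos v"
    by simp_all
  show "w = u \<or> w = v" if w: "w \<in> V" "pos w \<in> path_image (linepath (pos u) (pos v))" for w
  proof (rule ccontr)
    assume w_not_end: "\<not> (w = u \<or> w = v)"
    \<comment> \<open>the degree bound gives an edge at w avoiding u and v, whose segment would meet uv at pos w\<close>
    have "\<not> {x. E w x} \<subseteq> {u, v}"
      using card_mono[of "{u, v}" "{x. E w x}"] degree[OF w(1)] by (cases "u = v") auto
    then obtain x where x: "E w x" "x \<noteq> u" "x \<noteq> v" by blast
    have "{w, x} \<noteq> {u, v}" using w_not_end by (auto simp: doubleton_eq_iff)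
    then have "pos w \<in> {pos w, pos x} \<inter> {pos u, pos v}"
      using edges[OF x(1) uv] w(2) unfolding segments_meet_at_ends_def by auto
    then show False
      using w_not_end w(1) in_V[OF uv] in_V[OF x(1)] x(2,3) inj by (auto dest: inj_onD)
  qed
  fix x y assume xy: "E x y" "{u, v} \<noteq> {x, y}"
  have "pos ` ({u, v} \<inter> {x, y}) = pos ` {u, v} \<inter> pos ` {x, y}"
    by (rule inj_on_image_Int[OF inj]) (use in_V[OF uv] in_V[OF xy(1)] in auto)
  then show "path_image (linepath (pos u) (pos v)) \<inter> path_image (linepath (pos x) (pos y))
      \<subseteq> pos ` ({u, v} \<inter> {x, y})"
    using edges[OF uv xy] unfolding segments_meet_at_ends_def by simp
qed

lemma is_walk_singleton: "u \<in> V \<Longrightarrow> is_walk V E [u]"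
  unfolding is_walk_def by simp

lemma is_walk_edge: "u \<in> V \<Longrightarrow> v \<in> V \<Longrightarrow> E u v \<Longrightarrow> is_walk V E [u, v]"
  unfolding is_walk_def by (auto simp: less_Suc_eq)

lemma is_walk_path2:
  "u \<in> V \<Longrightarrow> w \<in> V \<Longrightarrow> v \<in> V \<Longrightarrow> E u w \<Longrightarrow> E w v \<Longrightarrow> is_walk V E [u, w, v]"
  unfolding is_walk_def by (auto simp: less_Suc_eq nth_Cons split: nat.splits)

lemma gdist_le_walk:
  assumes "is_walk V E xs" "hd xs = u" "last xs = v" "length xs = Suc n"
  shows "gdist V E u v \<le> n"
  unfolding gdist_def by (rule Least_le) (use assms in blast)

lemma shortest_walk_exists:
  assumes "is_walk V E xs" "hd xs = u" "last xs = v"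
  obtains ys where "is_walk V E ys" "hd ys = u" "last ys = v" "length ys = Suc (gdist V E u v)"
proof -
  have "length xs = Suc (length xs - 1)" using assms(1) unfolding is_walk_def by simp
  then have "\<exists>n xs. is_walk V E xs \<and> hd xs = u \<and> last xs = v \<and> length xs = Suc n"
    using assms by blast
  then have "\<exists>ys. is_walk V E ys \<and> hd ys = u \<and> last ys = v \<and> length ys = Suc (gdist V E u v)"
    unfolding gdist_def by (rule LeastI_ex)
  with that show ?thesis by blast
qed

lemma gdist_self: "u \<in> V \<Longrightarrow> gdist V E u u = 0"
  using gdist_le_walk[OF is_walk_singleton] by fastforce

lemma gdist_pos:
  assumes "is_walk V E xs" "hd xs = u" "last xs = v" "u \<noteq> v"
  shows "0 < gdist V E u v"
proof (rule ccontr)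
  assume "\<not> 0 < gdist V E u v"
  then obtain ys where "hd ys = u" "last ys = v" "length ys = Suc 0"
    using shortest_walk_exists[OF assms(1-3)] by auto
  then show False using assms(4) by (auto simp: length_Suc_conv)
qed

lemma gdist_eq_1:
  assumes "u \<in> V" "v \<in> V" "E u v" "u \<noteq> v"
  shows "gdist V E u v = 1"
proof -
  have walk: "is_walk V E [u, v]" using assms(1-3) by (rule is_walk_edge)
  show ?thesis using gdist_le_walk[OF walk, of u v] gdist_pos[OF walk, of u v] assms(4) by simp
qed

lemma gdist_eq_2:
  assumes "u \<in> V" "w \<in> V" "v \<in> V" "E u w" "E w v" "u \<noteq> v" "\<not> E u v"
  shows "gdist V E u v = 2"
proof -
  have walk: "is_walk V E [u, w, v]" using assms(1-5) by (rule is_walk_path2)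
  have "gdist V E u v \<noteq> 1"
  proof
    assume "gdist V E u v = 1"
    moreover obtain ys where ys: "is_walk V E ys" "hd ys = u" "last ys = v"
      "length ys = Suc (gdist V E u v)"
      using shortest_walk_exists[OF walk, of u v] by auto
    ultimately obtain a b where "ys = [a, b]" by (auto simp: length_Suc_conv)
    then show False using ys assms(7) unfolding is_walk_def by auto
  qed
  then show ?thesis using gdist_le_walk[OF walk, of u v] gdist_pos[OF walk, of u v] assms(6) by simp
qed

lemma simple_graph_sym: "simple_graph V E \<Longrightarrow> E u v \<Longrightarrow> E v u"
  unfolding simple_graph_def by blast

lemma universal_vertex_common_neighbour:
  assumes graph: "simple_graph V E" and c: "\<And>v. v \<in> V \<Longrightarrow> v \<noteq> c \<Longrightarrow> E c v"
    and uv: "u \<in> V" "v \<in> V" "u \<noteq> v" "\<not> E u v"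
  shows "E u c" "E c v"
proof -
  have "u \<noteq> c" using c[OF uv(2)] uv(3,4) by blast
  moreover have "v \<noteq> c" using c[OF uv(1)] uv(3,4) simple_graph_sym[OF graph] by blast
  ultimately show "E u c" "E c v" using c uv(1,2) simple_graph_sym[OF graph] by blast+
qed

lemma gdist_universal_vertex:
  assumes graph: "simple_graph V E" and c: "c \<in> V" "\<And>v. v \<in> V \<Longrightarrow> v \<noteq> c \<Longrightarrow> E c v"
    and uv: "u \<in> V" "v \<in> V"
  shows "gdist V E u v = (if u = v then 0 else if E u v then 1 else 2)"
proof -
  consider "u = v" | "u \<noteq> v" "E u v" | "u \<noteq> v" "\<not> E u v" by blast
  then show ?thesis
  proof cases
    case 1 then show ?thesis using gdist_self uv by simp
  next
    case 2 then show ?thesis using gdist_eq_1 uv by simp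
  next
    case 3
    then show ?thesis
      using gdist_eq_2[OF uv(1) c(1) uv(2)] universal_vertex_common_neighbour[OF graph c(2) uv] by simp
  qed
qed

lemma connected_graph_universal_vertex:
  assumes graph: "simple_graph V E" and c: "c \<in> V" "\<And>v. v \<in> V \<Longrightarrow> v \<noteq> c \<Longrightarrow> E c v"
  shows "connected_graph V E"
  unfolding connected_graph_def
proof (intro conjI ballI)
  show "V \<noteq> {}" using c(1) by blast
  fix u v assume uv: "u \<in> V" "v \<in> V"
  consider "u = v" | "u \<noteq> v" "E u v" | "u \<noteq> v" "\<not> E u v" by blast
  then show "\<exists>xs. is_walk V E xs \<and> hd xs = u \<and> last xs = v"
  proof cases
    case 1 then show ?thesis using is_walk_singleton[OF uv(1)] by fastforce
  next
    case 2 then show ?thesis using is_walk_edge[OF uv] by fastforce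
  next
    case 3
    then show ?thesis using is_walk_path2[OF uv(1) c(1) uv(2)]
      universal_vertex_common_neighbour[OF graph c(2) uv] by fastforce
  qed
qed

lemma local_resolving_set_meets_twins:
  assumes W: "local_resolving_set V E W" and uv: "u \<in> V" "v \<in> V" "E u v"
    and twins: "\<And>w. w \<in> V \<Longrightarrow> w \<noteq> u \<Longrightarrow> w \<noteq> v \<Longrightarrow> gdist V E u w = gdist V E v w"
  shows "u \<in> W \<or> v \<in> W"
proof (rule ccontr)
  assume "\<not> (u \<in> W \<or> v \<in> W)"
  then obtain w where "w \<in> W" "gdist V E u w \<noteq> gdist V E v w"
    using W uv unfolding local_resolving_set_def by blast
  with \<open>\<not> (u \<in> W \<or> v \<in> W)\<close> show False
    using W twins unfolding local_resolving_set_def by blast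
qed

lemma local_metric_dim_eqI:
  assumes "finite V" "local_resolving_set V E W"
    and minimal: "\<And>W'. local_resolving_set V E W' \<Longrightarrow> card W \<le> card W'"
  shows "local_metric_dim V E = card W"
  unfolding local_metric_dim_def
proof (rule Min_eqI)
  have "{card W | W. local_resolving_set V E W} \<subseteq> {..card V}"
    using assms(1) unfolding local_resolving_set_def by (auto intro: card_mono)
  then show "finite {card W | W. local_resolving_set V E W}" by (rule finite_subset) simp
qed (use assms(2) minimal in auto)

lemma card_le_Suc_card_Int_if_meets_pairs:
  assumes "finite T" and meets: "\<And>a b. a \<in> T \<Longrightarrow> b \<in> T \<Longrightarrow> a \<noteq> b \<Longrightarrow> a \<in> W \<or> b \<in> W"
  shows "card T \<le> Suc (card (T \<inter> W))"
proof -
  have "card (T - W) \<le> Suc 0"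
    using assms by (subst card_le_Suc0_iff_eq) auto
  then show ?thesis using card_Int_Diff[OF assms(1), of W] by simp
qed

lemma Gl_V_eq: "Gl_V l = insert None (Some ` ({..<l} \<times> {..<3}))"
  unfolding Gl_V_def by auto

lemma mem_Gl_V [simp]: "None \<in> Gl_V l" "Some (i, j) \<in> Gl_V l \<longleftrightarrow> i < l \<and> j < 3"
  unfolding Gl_V_def by auto

lemma finite_Gl_V: "finite (Gl_V l)"
  unfolding Gl_V_eq by simp

lemma card_Gl_V: "card (Gl_V l) = 3 * l + 1"
proof -
  have "card (Some ` ({..<l} \<times> {..<3::nat})) = 3 * l"
    by (subst card_image) (simp_all add: card_cartesian_product)
  then show ?thesis unfolding Gl_V_eq by (subst card_insert_disjoint) auto
qed

lemma simple_graph_Gl: "simple_graph (Gl_V l) (Gl_E l)"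
proof -
  have "u \<in> Gl_V l \<and> v \<in> Gl_V l \<and> Gl_E l v u" if "Gl_E l u v" for u v
    using that by (cases "(l, u, v)" rule: Gl_E.cases) auto
  moreover have "\<not> Gl_E l u u" for u
    by (cases "(l, u, u)" rule: Gl_E.cases) auto
  ultimately show ?thesis unfolding simple_graph_def using finite_Gl_V by blast
qed

lemma Gl_E_center: "v \<in> Gl_V l \<Longrightarrow> v \<noteq> None \<Longrightarrow> Gl_E l None v"
  unfolding Gl_V_eq by auto

lemma gdist_Gl:
  "u \<in> Gl_V l \<Longrightarrow> v \<in> Gl_V l \<Longrightarrow>
    gdist (Gl_V l) (Gl_E l) u v = (if u = v then 0 else if Gl_E l u v then 1 else 2)"
  by (rule gdist_universal_vertex[OF simple_graph_Gl mem_Gl_V(1) Gl_E_center])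

definition Gl_triangle :: "nat \<Rightarrow> (nat \<times> nat) option set" where
  "Gl_triangle i = {Some (i, 0), Some (i, 1), Some (i, 2)}"

lemma gdist_Gl_triangle_twins:
  assumes "i < l" "a \<in> Gl_triangle i" "b \<in> Gl_triangle i" "w \<in> Gl_V l" "w \<noteq> a" "w \<noteq> b"
  shows "gdist (Gl_V l) (Gl_E l) a w = gdist (Gl_V l) (Gl_E l) b w"
proof -
  have "Gl_E l a w \<longleftrightarrow> Gl_E l b w"
    using assms by (cases w) (auto simp: Gl_triangle_def)
  moreover have "a \<in> Gl_V l" "b \<in> Gl_V l" using assms(1-3) by (auto simp: Gl_triangle_def)
  ultimately show ?thesis using gdist_Gl assms(4-6) by simp
qed

lemma local_resolving_set_Gl_card_ge:
  assumes W: "local_resolving_set (Gl_V l) (Gl_E l) W"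
  shows "2 * l \<le> card W"
proof -
  have triangle: "2 \<le> card (Gl_triangle i \<inter> W)" if i: "i < l" for i
  proof -
    have "a \<in> W \<or> b \<in> W" if "a \<in> Gl_triangle i" "b \<in> Gl_triangle i" "a \<noteq> b" for a b
    proof (rule local_resolving_set_meets_twins[OF W])
      show "a \<in> Gl_V l" "b \<in> Gl_V l" "Gl_E l a b" using i that by (auto simp: Gl_triangle_def)
    qed (use gdist_Gl_triangle_twins[OF i that(1,2)] in blast)
    then have "card (Gl_triangle i) \<le> Suc (card (Gl_triangle i \<inter> W))"
      by (intro card_le_Suc_card_Int_if_meets_pairs) (simp_all add: Gl_triangle_def)
    then show ?thesis by (simp add: Gl_triangle_def)
  qed
  have "2 * l = (\<Sum>i<l. 2)" by simp
  also have "\<dots> \<le> (\<Sum>i<l. card (Gl_triangle i \<inter> W))" by (rule sum_mono) (use triangle in auto)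
  also have "\<dots> = card (\<Union>i<l. Gl_triangle i \<inter> W)"
    by (rule card_UN_disjoint[symmetric]) (auto simp: Gl_triangle_def)
  also have "\<dots> \<le> card W"
    using W finite_Gl_V unfolding local_resolving_set_def by (intro card_mono) (auto intro: finite_subset)
  finally show ?thesis .
qed

definition Gl_resolving :: "nat \<Rightarrow> (nat \<times> nat) option set" where
  "Gl_resolving l = Some ` ({..<l} \<times> {..<2})"

lemma mem_Gl_resolving [simp]:
  "None \<notin> Gl_resolving l" "Some (i, j) \<in> Gl_resolving l \<longleftrightarrow> i < l \<and> j < 2"
  unfolding Gl_resolving_def by auto

lemma card_Gl_resolving: "card (Gl_resolving l) = 2 * l"
  unfolding Gl_resolving_def by (subst card_image) (simp_all add: card_cartesian_product)

lemma local_resolving_set_Gl_resolving: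
  assumes "2 \<le> l"
  shows "local_resolving_set (Gl_V l) (Gl_E l) (Gl_resolving l)"
  unfolding local_resolving_set_def
proof (intro conjI allI impI)
  show "Gl_resolving l \<subseteq> Gl_V l" unfolding Gl_resolving_def by auto
  have center_resolved: "\<exists>w\<in>Gl_resolving l.
      gdist (Gl_V l) (Gl_E l) None w \<noteq> gdist (Gl_V l) (Gl_E l) (Some (i, 2)) w" if "i < l" for i
  proof
    define i' where "i' = (if i = 0 then 1 else 0 :: nat)"
    have "i' < l" "i' \<noteq> i" using assms unfolding i'_def by auto
    then show "Some (i', 0) \<in> Gl_resolving l"
      and "gdist (Gl_V l) (Gl_E l) None (Some (i', 0)) \<noteq> gdist (Gl_V l) (Gl_E l) (Some (i, 2)) (Some (i', 0))"
      using that by (auto simp: gdist_Gl)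
  qed
  fix u v
  assume "u \<in> Gl_V l - Gl_resolving l" "v \<in> Gl_V l - Gl_resolving l" "Gl_E l u v"
  then consider i where "i < l" "u = None" "v = Some (i, 2)" | i where "i < l" "u = Some (i, 2)" "v = None"
    by (cases "(l, u, v)" rule: Gl_E.cases) auto
  then show "\<exists>w\<in>Gl_resolving l. gdist (Gl_V l) (Gl_E l) u w \<noteq> gdist (Gl_V l) (Gl_E l) v w"
    by cases (metis center_resolved)+
qed

lemma local_metric_dim_Gl:
  assumes "2 \<le> l"
  shows "local_metric_dim (Gl_V l) (Gl_E l) = 2 * l"
  using local_metric_dim_eqI[OF finite_Gl_V local_resolving_set_Gl_resolving[OF assms]]
    local_resolving_set_Gl_card_ge
  by (simp add: card_Gl_resolving)

(* Triangle i lies in the sector of slopes between 4i and 4i + 2, with (i, 0) inside the triangle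
   spanned by the centre 0, (i, 1) and (i, 2). *)
fun Gl_pos :: "(nat \<times> nat) option \<Rightarrow> complex" where
  "Gl_pos None = 0"
| "Gl_pos (Some (i, j)) =
    (if j = 0 then Complex 1 (4 * real i + 1)
     else if j = 1 then Complex 2 (8 * real i) else Complex 2 (8 * real i + 4))"

lemma inj_on_Gl_pos: "inj_on Gl_pos (Gl_V l)"
proof (rule inj_onI)
  have Im_distinct: "8 * real a \<noteq> 8 * real b + 4" for a b :: nat
  proof
    assume "8 * real a = 8 * real b + 4"
    then have "8 * a = 8 * b + 4" by (metis of_nat_eq_iff of_nat_mult of_nat_add of_nat_numeral)
    then show False by presburger
  qed
  fix u v assume "u \<in> Gl_V l" "v \<in> Gl_V l" "Gl_pos u = Gl_pos v"
  then show "u = v"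
    unfolding Gl_V_eq by (auto simp: complex_eq_iff split: if_splits) (metis Im_distinct)+
qed

lemma Gl_cluster_segments:
  assumes "u \<in> insert None (Gl_triangle i)" "v \<in> insert None (Gl_triangle i)"
    "x \<in> insert None (Gl_triangle i)" "y \<in> insert None (Gl_triangle i)"
    "u \<noteq> v" "x \<noteq> y" "{u, v} \<noteq> {x, y}"
  shows "segments_meet_at_ends (Gl_pos u) (Gl_pos v) (Gl_pos x) (Gl_pos y)"
proof -
  define P Q R where "P = Complex 1 (4 * real i + 1)" and "Q = Complex 2 (8 * real i)"
    and "R = Complex 2 (8 * real i + 4)"
  note separate = segments_meet_at_ends_if_separated
  note coordinates = P_def Q_def R_def inner_complex_def algebra_simps
  have base: "segments_meet_at_ends 0 Q 0 P" "segments_meet_at_ends 0 P 0 R"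
    "segments_meet_at_ends 0 Q 0 R" "segments_meet_at_ends P Q P R"
    "segments_meet_at_ends P 0 P Q" "segments_meet_at_ends P 0 P R"
    "segments_meet_at_ends Q P Q R" "segments_meet_at_ends Q 0 Q P"
    "segments_meet_at_ends Q 0 Q R" "segments_meet_at_ends R Q R P"
    "segments_meet_at_ends R 0 R P" "segments_meet_at_ends R 0 R Q"
    "segments_meet_at_ends 0 P Q R" "segments_meet_at_ends 0 Q P R" "segments_meet_at_ends 0 R P Q"
    by ((rule separate[where n = "Complex (-(4 * real i + 1/2)) 1" and c = 0]; auto simp: coordinates),
        (rule separate[where n = "Complex (-(4 * real i + 3/2)) 1" and c = 0]; auto simp: coordinates),
        (rule separate[where n = "Complex (-(4 * real i + 1)) 1" and c = 0]; auto simp: coordinates),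
        (rule separate[where n = "Complex (-(4 * real i + 1)) 1" and c = 0]; auto simp: coordinates),
        (rule separate[where n = "Complex 1 0" and c = 1]; auto simp: coordinates),
        (rule separate[where n = "Complex 1 0" and c = 1]; auto simp: coordinates),
        (rule separate[where n = "Complex 2 1" and c = "8 * real i + 4"]; auto simp: coordinates),
        (rule separate[where n = "Complex (1/2 - 4 * real i) 1" and c = 1]; auto simp: coordinates),
        (rule separate[where n = "Complex (1/2 - 4 * real i) 1" and c = 1]; auto simp: coordinates),
        (rule separate[where n = "Complex (-(4 * real i + 4)) 1" and c = "-4"]; auto simp: coordinates),
        (rule separate[where n = "Complex (4 * real i + 5/2) (-1)" and c = 1]; auto simp: coordinates),
        (rule separate[where n = "Complex (4 * real i + 5/2) (-1)" and c = 1]; auto simp: coordinates),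
        (rule separate[where n = "Complex 1 0" and c = "3/2"]; auto simp: coordinates),
        (rule separate[where n = "Complex (-(4 * real i + 1/2)) 1" and c = 0]; auto simp: coordinates),
        (rule separate[where n = "Complex (4 * real i + 3/2) (-1)" and c = 0]; auto simp: coordinates))
  note variants = base base[THEN segments_meet_at_ends_swap(1)] base[THEN segments_meet_at_ends_swap(2)]
    base[THEN segments_meet_at_ends_swap(3)] base[THEN segments_meet_at_ends_swap(4)]
    base[THEN segments_meet_at_ends_swap(5)] base[THEN segments_meet_at_ends_swap(6)]
    base[THEN segments_meet_at_ends_swap(7)]
  have pos: "Gl_pos (Some (i, 0)) = P" "Gl_pos (Some (i, 1)) = Q" "Gl_pos (Some (i, 2)) = R"
    unfolding P_def Q_def R_def by simp_all
  show ?thesis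
    using assms unfolding Gl_triangle_def
    by (elim insertE emptyE) (simp_all only: pos Gl_pos.simps(1) variants doubleton_eq_iff, auto)
qed

lemma Gl_separate_clusters:
  fixes i i' :: nat
  assumes "i < i'" "u \<in> insert None (Gl_triangle i)" "v \<in> insert None (Gl_triangle i)"
    "x \<in> insert None (Gl_triangle i')" "y \<in> insert None (Gl_triangle i')" "u \<noteq> v" "x \<noteq> y"
  shows "segments_meet_at_ends (Gl_pos u) (Gl_pos v) (Gl_pos x) (Gl_pos y)"
proof -
  define n where "n = Complex (-(4 * real i + 3)) 1"
  have "real i + 1 \<le> real i'" using assms(1) by simp
  have below: "n \<bullet> Gl_pos w < 0" if "w \<in> Gl_triangle i" for w
    using that by (auto simp: n_def Gl_triangle_def inner_complex_def algebra_simps)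
  have above: "0 < n \<bullet> Gl_pos w" if "w \<in> Gl_triangle i'" for w
    using that \<open>real i + 1 \<le> real i'\<close> by (auto simp: n_def Gl_triangle_def inner_complex_def algebra_simps)
  show ?thesis
    by (rule segments_meet_at_ends_if_separated[where n = n and c = 0]) (use assms below above in fastforce)+
qed

lemma Gl_E_in_cluster:
  assumes "Gl_E l u v"
  obtains i where "i < l" "u \<in> insert None (Gl_triangle i)" "v \<in> insert None (Gl_triangle i)"
proof -
  have "j < 3 \<Longrightarrow> Some (i, j) \<in> Gl_triangle i" for i j :: nat
    by (auto simp: Gl_triangle_def less_Suc_eq numeral_3_eq_3)
  then show ?thesis using assms that by (cases "(l, u, v)" rule: Gl_E.cases) auto
qed

lemma Gl_segments_meet_at_ends:
  assumes "Gl_E l u v" "Gl_E l x y" "{u, v} \<noteq> {x, y}"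
  shows "segments_meet_at_ends (Gl_pos u) (Gl_pos v) (Gl_pos x) (Gl_pos y)"
proof -
  have "u \<noteq> v" "x \<noteq> y" using assms(1,2) simple_graph_Gl unfolding simple_graph_def by metis+
  moreover obtain i where "u \<in> insert None (Gl_triangle i)" "v \<in> insert None (Gl_triangle i)"
    using Gl_E_in_cluster[OF assms(1)] by blast
  moreover obtain i' where "x \<in> insert None (Gl_triangle i')" "y \<in> insert None (Gl_triangle i')"
    using Gl_E_in_cluster[OF assms(2)] by blast
  moreover consider "i = i'" | "i < i'" | "i' < i" by linarith
  ultimately show ?thesis
    by cases (use Gl_cluster_segments assms(3) Gl_separate_clusters segments_meet_at_ends_swap(4) in metis)+
qed

lemma Gl_degree:
  assumes "1 \<le> l" "w \<in> Gl_V l"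
  shows "3 \<le> card {x. Gl_E l w x}"
proof -
  obtain a b c where abc: "Gl_E l w a" "Gl_E l w b" "Gl_E l w c" "distinct [a, b, c]"
  proof (cases w)
    case None
    then show ?thesis using that[of "Some (0, 0)" "Some (0, 1)" "Some (0, 2)"] assms(1) by simp
  next
    case (Some p)
    then obtain i j where "w = Some (i, j)" "i < l" "j < 3" using assms(2) by (cases p) auto
    moreover have "j \<noteq> (j + 1) mod 3" "j \<noteq> (j + 2) mod 3" "(j + 1) mod 3 \<noteq> (j + 2) mod 3"
      by presburger+
    ultimately show ?thesis using that[of None "Some (i, (j + 1) mod 3)" "Some (i, (j + 2) mod 3)"] by simp
  qed
  have "finite {x. Gl_E l w x}"
    using simple_graph_Gl finite_Gl_V unfolding simple_graph_def by (metis finite_subset mem_Collect_eq subsetI)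
  then have "card {a, b, c} \<le> card {x. Gl_E l w x}" using abc(1-3) by (intro card_mono) auto
  then show ?thesis using abc(4) by simp
qed

lemma planar_graph_Gl:
  assumes "1 \<le> l"
  shows "planar_graph (Gl_V l) (Gl_E l)"
  using simple_graph_Gl inj_on_Gl_pos Gl_degree[OF assms] Gl_segments_meet_at_ends
  by (rule planar_graph_if_straight_line_drawing)

theorem mainTheorem7:
  shows "(\<forall>l::nat. l \<ge> 2 \<longrightarrow>
            simple_graph (Gl_V l) (Gl_E l) \<and> planar_graph (Gl_V l) (Gl_E l) \<and>
            local_metric_dim (Gl_V l) (Gl_E l) = 2 * l)
       \<and> (\<exists>(V :: (nat \<times> nat) option set) E. simple_graph V E \<and> connected_graph V E \<and>
            planar_graph V E \<and> int (local_metric_dim V E) > \<lceil>(real (card V) + 1) / 2\<rceil>)"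
proof (intro conjI allI impI)
  fix l :: nat assume "l \<ge> 2"
  then show "simple_graph (Gl_V l) (Gl_E l)" "planar_graph (Gl_V l) (Gl_E l)"
    "local_metric_dim (Gl_V l) (Gl_E l) = 2 * l"
    using simple_graph_Gl planar_graph_Gl local_metric_dim_Gl by auto
next
  have "connected_graph (Gl_V 4) (Gl_E 4)"
    using simple_graph_Gl mem_Gl_V(1) Gl_E_center by (rule connected_graph_universal_vertex)
  moreover have "int (local_metric_dim (Gl_V 4) (Gl_E 4)) > \<lceil>(real (card (Gl_V 4)) + 1) / 2\<rceil>"
    by (simp add: local_metric_dim_Gl card_Gl_V)
  ultimately show "\<exists>(V :: (nat \<times> nat) option set) E. simple_graph V E \<and> connected_graph V E \<and>
      planar_graph V E \<and> int (local_metric_dim V E) > \<lceil>(real (card V) + 1) / 2\<rceil>"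
    using simple_graph_Gl planar_graph_Gl[of 4] by auto
qed

end
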